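(* Let $\mathscr D_n$ be a finite b-quad-graph with associated graph $G_n$, let $\alpha_n$ be an admissible labelling, and let $\mathscr C_n,\widetilde{\mathscr C}_n$ be embedded convex $q$-bounded circle patterns for $\mathscr D_n$ and $\alpha_n$ with radius functions $r_n,\tilde r_n$. Let $u_n(v)=\tilde r_n(v)/r_n(v)$. Define two Laplacians on functions $h:V(G_n)\to\mathbb R$ by $\Delta h(v_0)=\sum_{[v_0,v]\in E(G_n)}\mu([v_0,v])(h(v)-h(v_0))$ and $\widetilde\Delta h(v_0)=\sum_{[v_0,v]\in E(G_n)}\tilde\mu([v_0,v])(h(v)-h(v_0))$, where $\mu([v_0,v])=2f'_{\alpha_n([v_0,v])}(\log(r_n(v)/r_n(v_0)))$ and $\tilde\mu([v_0,v])=2f'_{\alpha_n([v_0,v])}(\log(\tilde r_n(v)/\tilde r_n(v_0)))$, with $f'_\theta(x)=\frac{\sin\theta}{2(\cosh x-\cos\theta)}$. Then for all interior vertices $v$ of $G_n$, $\Delta u_n(v)\ge0$ and $\widetilde\Delta(1/u_n)(v)\ge0$.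
   Context: A b-quad-graph: strongly regular cell decomposition into quadrilaterals with bipartite 1-skeleton (white/black vertices); $G_n$ has the white vertices, adjacent iff incident to a common face. Admissible labelling: at each interior black vertex the labels of incident faces sum to $2\pi$. Circle pattern: circles with circles of adjacent vertices intersecting at exterior angle $\alpha$ (angle at an intersection point between the radii to the two centers), with equally oriented kites formed by centers and intersection points, locally isomorphic to the b-quad-graph at interior vertices; embedded: kites have disjoint interiors and meet in an edge/vertex iff the faces do. Convex $q$-bounded ($q>1$): all kites convex and each kite's diagonal length ratio lies in $[1/q,q]$. *)

theory Defs
  imports "HOL-Analysis.Analysis"
begin

text \<open>A b-quad-graph is given by its white vertices, black vertices, faces and,
for every face f, the cyclic (positively oriented) list of its four vertices
qd f = (a, b, c, d) with a, c white and b, d black.\<close>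

record ('v, 'f) bquad =
  wht :: "'v set"
  blk :: "'v set"
  fcs :: "'f set"
  qd  :: "'f \<Rightarrow> 'v \<times> 'v \<times> 'v \<times> 'v"

definition fverts :: "('v,'f) bquad \<Rightarrow> 'f \<Rightarrow> 'v set" where
  "fverts D f = (case qd D f of (a,b,c,d) \<Rightarrow> {a,b,c,d})"

definition fedges :: "('v,'f) bquad \<Rightarrow> 'f \<Rightarrow> 'v set set" where
  "fedges D f = (case qd D f of (a,b,c,d) \<Rightarrow> {{a,b},{b,c},{c,d},{d,a}})"

definition fdedges :: "('v,'f) bquad \<Rightarrow> 'f \<Rightarrow> ('v \<times> 'v) set" where
  "fdedges D f = (case qd D f of (a,b,c,d) \<Rightarrow> {(a,b),(b,c),(c,d),(d,a)})"

definition bq_vertices :: "('v,'f) bquad \<Rightarrow> 'v set" where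
  "bq_vertices D = (\<Union>f\<in>fcs D. fverts D f)"

definition bq_edges :: "('v,'f) bquad \<Rightarrow> 'v set set" where
  "bq_edges D = (\<Union>f\<in>fcs D. fedges D f)"

definition faces_at :: "('v,'f) bquad \<Rightarrow> 'v \<Rightarrow> 'f set" where
  "faces_at D v = {f \<in> fcs D. v \<in> fverts D f}"

definition faces_of_edge :: "('v,'f) bquad \<Rightarrow> 'v set \<Rightarrow> 'f set" where
  "faces_of_edge D e = {f \<in> fcs D. e \<in> fedges D f}"

definition link_rel :: "('v,'f) bquad \<Rightarrow> 'v \<Rightarrow> ('f \<times> 'f) set" where
  "link_rel D v = {(f,g). f \<in> faces_at D v \<and> g \<in> faces_at D v \<and>
                          (\<exists>e \<in> fedges D f \<inter> fedges D g. v \<in> e)}"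

definition face_adj :: "('v,'f) bquad \<Rightarrow> ('f \<times> 'f) set" where
  "face_adj D = {(f,g). f \<in> fcs D \<and> g \<in> fcs D \<and> fverts D f \<inter> fverts D g \<noteq> {}}"

definition finite_bquad :: "('v,'f) bquad \<Rightarrow> bool" where
  "finite_bquad D \<longleftrightarrow>
     finite (wht D) \<and> finite (blk D) \<and> finite (fcs D) \<and> fcs D \<noteq> {} \<and>
     wht D \<inter> blk D = {} \<and>
     bq_vertices D = wht D \<union> blk D \<and>
     (\<forall>f\<in>fcs D. case qd D f of (a,b,c,d) \<Rightarrow>
         a \<in> wht D \<and> c \<in> wht D \<and> b \<in> blk D \<and> d \<in> blk D \<and> a \<noteq> c \<and> b \<noteq> d) \<and>
     \<comment> \<open>strong regularity: two distinct faces meet in nothing, a vertex or an edge\<close>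
     (\<forall>f\<in>fcs D. \<forall>g\<in>fcs D. f \<noteq> g \<longrightarrow>
         fverts D f \<noteq> fverts D g \<and>
         (fverts D f \<inter> fverts D g = {} \<or> card (fverts D f \<inter> fverts D g) = 1 \<or>
          fverts D f \<inter> fverts D g \<in> fedges D f \<inter> fedges D g)) \<and>
     \<comment> \<open>oriented surface: an edge lies in at most two faces, traversed oppositely\<close>
     (\<forall>f\<in>fcs D. \<forall>g\<in>fcs D. f \<noteq> g \<longrightarrow> fdedges D f \<inter> fdedges D g = {}) \<and>
     \<comment> \<open>manifold condition: the link of every vertex is connected\<close>
     (\<forall>v\<in>bq_vertices D. faces_at D v \<times> faces_at D v \<subseteq> (link_rel D v)\<^sup>*) \<and>
     \<comment> \<open>connectedness\<close>
     fcs D \<times> fcs D \<subseteq> (face_adj D)\<^sup>*"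

definition interior_vertex :: "('v,'f) bquad \<Rightarrow> 'v \<Rightarrow> bool" where
  "interior_vertex D v \<longleftrightarrow> v \<in> bq_vertices D \<and>
     (\<forall>e\<in>bq_edges D. v \<in> e \<longrightarrow> card (faces_of_edge D e) = 2)"

definition G_edges :: "('v,'f) bquad \<Rightarrow> 'v set set" where
  "G_edges D = {{v,w} | v w. v \<in> wht D \<and> w \<in> wht D \<and> v \<noteq> w \<and>
                            (\<exists>f\<in>fcs D. v \<in> fverts D f \<and> w \<in> fverts D f)}"

text \<open>The face corresponding to an edge of G (unique by strong regularity).\<close>
definition G_face :: "('v,'f) bquad \<Rightarrow> 'v set \<Rightarrow> 'f" where
  "G_face D e = (THE f. f \<in> fcs D \<and> e \<subseteq> fverts D f)"

definition admissible :: "('v,'f) bquad \<Rightarrow> ('f \<Rightarrow> real) \<Rightarrow> bool" where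
  "admissible D \<alpha> \<longleftrightarrow>
     (\<forall>f\<in>fcs D. 0 < \<alpha> f \<and> \<alpha> f < pi) \<and>
     (\<forall>b\<in>blk D. interior_vertex D b \<longrightarrow> (\<Sum>f\<in>faces_at D b. \<alpha> f) = 2 * pi)"

definition arg2pi :: "complex \<Rightarrow> real" where
  "arg2pi w = (if Arg w < 0 then Arg w + 2 * pi else Arg w)"

text \<open>z gives the centres (white vertices) and intersection points (black
vertices). Interior angle of the kite of face f at vertex v, for the cyclic
order of qd (positive orientation): rotation from (next - v) to (prev - v).\<close>
definition kangle :: "('v,'f) bquad \<Rightarrow> ('v \<Rightarrow> complex) \<Rightarrow> 'f \<Rightarrow> 'v \<Rightarrow> real" where
  "kangle D z f v = (case qd D f of (a,b,c,d) \<Rightarrow>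
      if v = a then arg2pi ((z d - z a) / (z b - z a))
      else if v = b then arg2pi ((z a - z b) / (z c - z b))
      else if v = c then arg2pi ((z b - z c) / (z d - z c))
      else arg2pi ((z c - z d) / (z a - z d)))"

definition kite :: "('v,'f) bquad \<Rightarrow> ('v \<Rightarrow> complex) \<Rightarrow> 'f \<Rightarrow> complex set" where
  "kite D z f = (case qd D f of (a,b,c,d) \<Rightarrow>
      convex hull {z a, z b, z c} \<union> convex hull {z a, z c, z d})"

text \<open>Circle pattern for D and \<alpha> with centres/intersection points z and radius
function r: for each face (a,b,c,d), the points z b, z d are the two distinct
intersection points of the circles around z a, z c; the kite angle at the
intersection points is \<alpha> f (this also fixes the common positive orientation
of all kites); and locally around every interior vertex the kites close up
with total angle 2 pi (local isomorphism with the b-quad-graph).\<close>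
definition circle_pattern ::
  "('v,'f) bquad \<Rightarrow> ('f \<Rightarrow> real) \<Rightarrow> ('v \<Rightarrow> complex) \<Rightarrow> ('v \<Rightarrow> real) \<Rightarrow> bool" where
  "circle_pattern D \<alpha> z r \<longleftrightarrow>
     (\<forall>v\<in>wht D. r v > 0) \<and>
     (\<forall>f\<in>fcs D. case qd D f of (a,b,c,d) \<Rightarrow>
        cmod (z b - z a) = r a \<and> cmod (z b - z c) = r c \<and>
        cmod (z d - z a) = r a \<and> cmod (z d - z c) = r c \<and> z b \<noteq> z d \<and>
        kangle D z f b = \<alpha> f \<and> kangle D z f d = \<alpha> f) \<and>
     (\<forall>v\<in>bq_vertices D. interior_vertex D v \<longrightarrow>
        (\<Sum>f\<in>faces_at D v. kangle D z f v) = 2 * pi)"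

definition embedded_pattern :: "('v,'f) bquad \<Rightarrow> ('v \<Rightarrow> complex) \<Rightarrow> bool" where
  "embedded_pattern D z \<longleftrightarrow>
     (\<forall>f\<in>fcs D. \<forall>g\<in>fcs D. f \<noteq> g \<longrightarrow>
        interior (kite D z f) \<inter> interior (kite D z g) = {} \<and>
        kite D z f \<inter> kite D z g = convex hull (z ` (fverts D f \<inter> fverts D g)))"

definition convex_q_bounded :: "real \<Rightarrow> ('v,'f) bquad \<Rightarrow> ('v \<Rightarrow> complex) \<Rightarrow> bool" where
  "convex_q_bounded q D z \<longleftrightarrow>
     (\<forall>f\<in>fcs D. convex (kite D z f) \<and>
        (case qd D f of (a,b,c,d) \<Rightarrow>
           1 / q \<le> cmod (z a - z c) / cmod (z b - z d) \<and>
           cmod (z a - z c) / cmod (z b - z d) \<le> q))"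

definition fprime :: "real \<Rightarrow> real \<Rightarrow> real" where
  "fprime \<theta> x = sin \<theta> / (2 * (cosh x - cos \<theta>))"

definition laplacian ::
  "('v,'f) bquad \<Rightarrow> ('f \<Rightarrow> real) \<Rightarrow> ('v \<Rightarrow> real) \<Rightarrow> ('v \<Rightarrow> real) \<Rightarrow> 'v \<Rightarrow> real" where
  "laplacian D \<alpha> r h v0 =
     (\<Sum>v\<in>{v. {v0, v} \<in> G_edges D}.
        2 * fprime (\<alpha> (G_face D {v0, v})) (ln (r v / r v0)) * (h v - h v0))"

end

theory Submission
  imports Defs
begin

text \<open>
  In the kite of a face f at a white vertex v, the angle at v equals
  \<open>2 \<phi>\<^sub>\<alpha>(y)\<close> with \<open>\<alpha> = \<alpha> f\<close> and y the radius of the opposite white vertex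
  divided by the radius at v. Convexity of the kite means that the midpoint of
  its black diagonal lies between the two centres, which amounts to \<open>y \<ge> cos \<alpha>\<close>;
  on this range \<open>\<phi>\<^sub>\<alpha>\<close> is concave. Both patterns close up around v, so
  \<open>\<Sum> \<phi>(y\<^sub>f) = \<Sum> \<phi>(y\<^sub>f') = \<pi>\<close>, and concavity gives \<open>\<Sum> \<phi>'(y\<^sub>f) (y\<^sub>f' - y\<^sub>f) \<ge> 0\<close>.
  Because \<open>f'\<^sub>\<alpha>(log y) = y \<phi>'(y)\<close>, this sum is \<open>\<Delta>u(v)\<close> up to the factor
  \<open>2 u(v) > 0\<close>. Exchanging the two patterns gives the second inequality.
\<close>

text \<open>\<open>half_kite_angle a\<close> is the function \<open>\<phi>\<^sub>a\<close> above.\<close>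

definition half_kite_angle :: "real \<Rightarrow> real \<Rightarrow> real" where
  "half_kite_angle a y = pi/2 - arctan ((1 - y * cos a) / (y * sin a))"

definition half_kite_angle' :: "real \<Rightarrow> real \<Rightarrow> real" where
  "half_kite_angle' a y = sin a / (y\<^sup>2 - 2 * y * cos a + 1)"

lemma sq_minus_two_cos_plus_one_eq: "(y::real)\<^sup>2 - 2 * y * cos a + 1 = (y - cos a)\<^sup>2 + (sin a)\<^sup>2"
  using sin_cos_squared_add[of a] by (simp add: power2_eq_square algebra_simps)

lemma sq_minus_two_cos_plus_one_pos:
  assumes "0 < a" "a < pi"
  shows "y\<^sup>2 - 2 * y * cos a + 1 > 0"
  unfolding sq_minus_two_cos_plus_one_eq using sin_gt_zero[OF assms]
  by (simp add: add_nonneg_pos)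

lemma has_real_derivative_half_kite_angle:
  assumes "0 < a" "a < pi" "y > 0"
  shows "(half_kite_angle a has_real_derivative half_kite_angle' a y) (at y)"
proof -
  have s: "sin a > 0" using assms sin_gt_zero by auto
  have "(half_kite_angle a has_real_derivative
      - (inverse (1 + ((1 - y * cos a) / (y * sin a))\<^sup>2) *
         (((- cos a) * (y * sin a) - (1 - y * cos a) * sin a) / (y * sin a)\<^sup>2))) (at y)"
    unfolding half_kite_angle_def using assms s
    by (auto intro!: derivative_eq_intros simp: power2_eq_square)
  moreover
  have "1 + ((1 - y * cos a) / (y * sin a))\<^sup>2 = (y\<^sup>2 - 2 * y * cos a + 1) / (y * sin a)\<^sup>2"
    using s assms sin_cos_squared_add[of a]
    by (simp add: field_simps power2_eq_square)
       (metis distrib_left mult_1_right sin_cos_squared_add3)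
  ultimately show ?thesis
    using s assms sq_minus_two_cos_plus_one_pos[OF assms(1,2), of y]
    by (simp add: half_kite_angle'_def field_simps power2_eq_square)
qed

lemma half_kite_angle'_antimono:
  assumes "0 < a" "a < pi" "(x - cos a)\<^sup>2 \<le> (\<xi> - cos a)\<^sup>2"
  shows "half_kite_angle' a \<xi> \<le> half_kite_angle' a x"
proof -
  have "0 < sin a" using sin_gt_zero[OF assms(1,2)] .
  then have "0 < (x - cos a)\<^sup>2 + (sin a)\<^sup>2" "0 < (\<xi> - cos a)\<^sup>2 + (sin a)\<^sup>2"
    by (simp_all add: add_nonneg_pos)
  then show ?thesis
    unfolding half_kite_angle'_def sq_minus_two_cos_plus_one_eq
    using assms(3) \<open>0 < sin a\<close> by (intro divide_left_mono) auto
qed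

lemma half_kite_angle_le_tangent:
  assumes a: "0 < a" "a < pi" and "y > 0" "y' > 0" "cos a \<le> y" "cos a \<le> y'"
  shows "half_kite_angle a y' - half_kite_angle a y \<le> half_kite_angle' a y * (y' - y)"
proof -
  consider "y' = y" | "y < y'" | "y' < y" by linarith
  then show ?thesis
  proof cases
    case 1
    then show ?thesis by simp
  next
    case 2
    obtain \<xi> where \<xi>: "y < \<xi>" "\<xi> < y'"
      "half_kite_angle a y' - half_kite_angle a y = (y' - y) * half_kite_angle' a \<xi>"
      using MVT2[OF 2, of "half_kite_angle a" "half_kite_angle' a"]
        has_real_derivative_half_kite_angle assms by force
    have "half_kite_angle' a \<xi> \<le> half_kite_angle' a y"
      using \<xi> assms by (intro half_kite_angle'_antimono power_mono) auto
    then show ?thesis using \<xi> 2 by (simp add: mult.commute mult_right_mono)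
  next
    case 3
    obtain \<xi> where \<xi>: "y' < \<xi>" "\<xi> < y"
      "half_kite_angle a y - half_kite_angle a y' = (y - y') * half_kite_angle' a \<xi>"
      using MVT2[OF 3, of "half_kite_angle a" "half_kite_angle' a"]
        has_real_derivative_half_kite_angle assms by force
    have "half_kite_angle' a y \<le> half_kite_angle' a \<xi>"
      using \<xi> assms by (intro half_kite_angle'_antimono power_mono) auto
    then have "(y - y') * half_kite_angle' a y \<le> (y - y') * half_kite_angle' a \<xi>"
      using 3 by (simp add: mult_left_mono)
    then show ?thesis using \<xi> by (simp add: algebra_simps)
  qed
qed

lemma sum_half_kite_angle'_mult_diff_nonneg:
  assumes "finite F"
    and "\<And>f. f \<in> F \<Longrightarrow> 0 < a f \<and> a f < pi"
    and "\<And>f. f \<in> F \<Longrightarrow> 0 < y f \<and> cos (a f) \<le> y f"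
    and "\<And>f. f \<in> F \<Longrightarrow> 0 < y' f \<and> cos (a f) \<le> y' f"
    and "(\<Sum>f\<in>F. half_kite_angle (a f) (y f)) = (\<Sum>f\<in>F. half_kite_angle (a f) (y' f))"
  shows "0 \<le> (\<Sum>f\<in>F. half_kite_angle' (a f) (y f) * (y' f - y f))"
proof -
  have "0 = (\<Sum>f\<in>F. half_kite_angle (a f) (y' f) - half_kite_angle (a f) (y f))"
    using assms(5) by (simp add: sum_subtractf)
  also have "\<dots> \<le> (\<Sum>f\<in>F. half_kite_angle' (a f) (y f) * (y' f - y f))"
    using assms(2-4) by (intro sum_mono half_kite_angle_le_tangent) auto
  finally show ?thesis .
qed

text \<open>This identity is where the Laplacian weights come from.\<close>

lemma fprime_ln_eq:
  assumes "y > 0" "0 < a" "a < pi"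
  shows "fprime a (ln y) = y * half_kite_angle' a y"
proof -
  have "cosh (ln y) = (y + 1/y) / 2"
    using assms by (simp add: cosh_def exp_minus field_simps)
  show ?thesis
    unfolding fprime_def half_kite_angle'_def \<open>cosh (ln y) = (y + 1/y) / 2\<close>
    using assms sq_minus_two_cos_plus_one_pos[of a y]
    by (simp add: field_simps power2_eq_square)
qed

lemma arg2pi_eq_imp_cis:
  assumes "arg2pi w = a" "0 < a" "a < pi"
  shows "w = of_real (cmod w) * cis a"
proof -
  have "Arg w = a"
    using assms Arg_bounded[of w] unfolding arg2pi_def by (auto split: if_splits)
  then show ?thesis using rcis_cmod_Arg[of w] by (simp add: rcis_def)
qed

lemma arg2pi_cis:
  assumes "0 < x" "x < 2 * pi"
  shows "arg2pi (cis x) = x"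
proof (cases "x \<le> pi")
  case True
  then show ?thesis using assms Arg_cis[of x] unfolding arg2pi_def by auto
next
  case False
  have "cis x = cis (x - 2 * pi)" by (simp add: complex_eq_iff cos_diff sin_diff)
  then have "Arg (cis x) = x - 2 * pi" using False assms Arg_cis[of "x - 2*pi"] by auto
  then show ?thesis using False assms unfolding arg2pi_def by auto
qed

lemma cnj_divide_self_eq_cis:
  assumes "Im W < 0"
  shows "cnj W / W = cis (2 * (pi/2 - arctan (Re W / (- Im W))))"
proof -
  define g where "g = Re W / (- Im W)"
  have q: "(sqrt (1 + g\<^sup>2))\<^sup>2 = 1 + g\<^sup>2" by simp
  have N: "(Re W)\<^sup>2 + (Im W)\<^sup>2 > 0" using assms by (simp add: add_nonneg_pos)
  have "(g\<^sup>2 - 1) = ((Re W)\<^sup>2 - (Im W)\<^sup>2) / (Im W)\<^sup>2"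
       "(1 + g\<^sup>2) = ((Re W)\<^sup>2 + (Im W)\<^sup>2) / (Im W)\<^sup>2"
    unfolding g_def using assms by (simp_all add: power_divide field_simps)
  then have "Re (cnj W / W) = (g\<^sup>2 - 1) / (1 + g\<^sup>2)"
    using assms by (simp add: Re_divide power2_eq_square)
  moreover have "Im (cnj W / W) = 2 * g / (1 + g\<^sup>2)"
    using assms N unfolding g_def by (simp add: Im_divide field_simps power2_eq_square)
  moreover have "cos (2 * (pi/2 - arctan g)) = (g\<^sup>2 - 1) / (1 + g\<^sup>2)"
    unfolding cos_double
    by (simp add: cos_diff sin_diff sin_arctan cos_arctan power_divide q diff_divide_distrib)
  moreover have "sin (2 * (pi/2 - arctan g)) = 2 * g / (1 + g\<^sup>2)"
    unfolding sin_double by (simp add: cos_diff sin_diff sin_arctan cos_arctan q)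
  ultimately show ?thesis unfolding g_def by (simp add: complex_eq_iff)
qed

lemma in_triangle_on_side_line_imp_le_1:
  fixes za zb zc p :: complex and x :: real
  assumes "zc \<noteq> za" "zb - za = p * (zc - za)" "Im p \<noteq> 0"
    and "za + of_real x * (zc - za) \<in> convex hull {za, zb, zc}"
  shows "x \<le> 1"
proof -
  obtain u v w where uvw: "0 \<le> u" "0 \<le> v" "0 \<le> w" "u + v + w = 1"
    "za + of_real x * (zc - za) = u *\<^sub>R za + v *\<^sub>R zb + w *\<^sub>R zc"
    using assms(4) unfolding convex_hull_3 by blast
  have "u = 1 - v - w" using uvw(4) by simp
  have "of_real x * (zc - za) = (za + of_real x * (zc - za)) - za"
    by simp
  also have "\<dots> = of_real v * (zb - za) + of_real w * (zc - za)"
    unfolding uvw(5) \<open>u = 1 - v - w\<close> by (simp add: scaleR_conv_of_real algebra_simps)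
  also have "\<dots> = (of_real v * p + of_real w) * (zc - za)"
    unfolding assms(2) by (simp add: algebra_simps)
  finally have "of_real x * (zc - za) = (of_real v * p + of_real w) * (zc - za)" .
  then have "of_real x = of_real v * p + of_real w" using assms(1) by simp
  then have "x = w" using assms(3) by (simp add: complex_eq_iff)
  then show ?thesis using uvw by simp
qed

lemma side_eq_of_arg2pi:
  assumes "cmod u = ra" "cmod w = rc" "w \<noteq> 0" "arg2pi (u / w) = a" "0 < a" "a < pi"
  shows "u = of_real (ra / rc) * cis a * w"
proof -
  have "u / w = of_real (ra / rc) * cis a"
    using arg2pi_eq_imp_cis[OF assms(4-6)] assms(1,2) by (simp add: norm_divide)
  then show ?thesis using assms(3) by (simp add: divide_eq_eq)
qed

text \<open>
  At zd the side towards zc is the side towards za turned by a and scaled by rc/ra,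
  so \<open>zc - za = (zd - za) (1 - (rc/ra) e\<^sup>i\<^sup>a)\<close>; at zb likewise with the opposite turn.
\<close>

lemma kite_sides_eq:
  fixes za zb zc zd :: complex and ra rc a :: real
  defines "W \<equiv> 1 - of_real (rc / ra) * cis a"
  assumes "ra > 0" "rc > 0" "0 < a" "a < pi"
    and "cmod (zb - za) = ra" "cmod (zb - zc) = rc" "cmod (zd - za) = ra" "cmod (zd - zc) = rc"
    and "arg2pi ((za - zb) / (zc - zb)) = a" "arg2pi ((zc - zd) / (za - zd)) = a"
  shows "zc - za = (zd - za) * W" and "zc - za = (zb - za) * cnj W"
proof -
  define y where "y = rc / ra"
  have W: "W = 1 - of_real y * cis a" unfolding W_def y_def ..
  have "za - zb = of_real (ra / rc) * cis a * (zc - zb)"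
  proof (rule side_eq_of_arg2pi)
    show "cmod (za - zb) = ra" "cmod (zc - zb) = rc"
      using assms(6,7) by (simp_all add: norm_minus_commute)
    then show "zc - zb \<noteq> 0" using assms(3) by auto
  qed (use assms(4,5,10) in auto)
  then have "of_real y * cnj (cis a) * (za - zb)
      = of_real (y * (ra / rc)) * (cis a * cnj (cis a)) * (zc - zb)"
    by (simp only: of_real_mult mult_ac)
  also have "\<dots> = zc - zb" using assms(2,3) by (simp add: y_def cis_cnj cis_mult)
  finally have side_b: "of_real y * cnj (cis a) * (za - zb) = zc - zb" .
  have "(zb - za) * cnj W = (zb - za) + of_real y * cnj (cis a) * (za - zb)"
    unfolding W by (simp add: algebra_simps)
  then show "zc - za = (zb - za) * cnj W" unfolding side_b by simp
  have side_d: "zc - zd = of_real y * cis a * (za - zd)"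
    unfolding y_def
  proof (rule side_eq_of_arg2pi)
    show "cmod (zc - zd) = rc" "cmod (za - zd) = ra"
      using assms(8,9) by (simp_all add: norm_minus_commute)
    then show "za - zd \<noteq> 0" using assms(2) by auto
  qed (use assms(4,5,11) in auto)
  have "(zd - za) * W = (zd - za) + of_real y * cis a * (za - zd)"
    unfolding W by (simp add: algebra_simps)
  then show "zc - za = (zd - za) * W" unfolding side_d[symmetric] by simp
qed

lemma kite_angle_eq:
  fixes za zb zc zd W :: complex and y a :: real
  assumes "W = 1 - of_real y * cis a" "y > 0" "0 < a" "a < pi" "zb \<noteq> za"
    and "zc - za = (zd - za) * W" "zc - za = (zb - za) * cnj W"
  shows "arg2pi ((zd - za) / (zb - za)) = 2 * half_kite_angle a y"
proof -
  have ImW: "Im W < 0" using assms(1-4) sin_gt_zero by simp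
  have "(zd - za) * W = cnj W * (zb - za)"
    using assms(6,7) by (simp add: mult.commute)
  moreover have "W \<noteq> 0" using ImW by auto
  ultimately have "(zd - za) / (zb - za) = cnj W / W"
    using assms(5) by (simp add: frac_eq_eq)
  also have "\<dots> = cis (2 * half_kite_angle a y)"
    using cnj_divide_self_eq_cis[OF ImW] assms(1) by (simp add: half_kite_angle_def)
  finally show ?thesis
    using arctan_bounded[of "(1 - y * cos a) / (y * sin a)"]
    by (simp add: arg2pi_cis half_kite_angle_def)
qed

text \<open>
  The midpoint of the black diagonal is \<open>za + Re (1/W) (zc - za)\<close>, on the line of
  the white diagonal; convexity puts it inside one of the two triangles.
\<close>

lemma convex_kite_imp_cos_le:
  fixes za zb zc zd W :: complex and y a :: real
  assumes "W = 1 - of_real y * cis a" "y > 0" "0 < a" "a < pi" "zc \<noteq> za"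
    and "zc - za = (zd - za) * W" "zc - za = (zb - za) * cnj W"
    and "convex (convex hull {za, zb, zc} \<union> convex hull {za, zc, zd})"
  shows "cos a \<le> y"
proof -
  have ImW: "Im W < 0" using assms(1-4) sin_gt_zero by simp
  then have W: "W \<noteq> 0" "cnj W \<noteq> 0" by auto
  have Im_inv: "Im (1 / W) \<noteq> 0" "Im (1 / cnj W) \<noteq> 0"
    using ImW by (auto simp: Im_divide add_nonneg_pos)
  have zb: "zb - za = (1 / cnj W) * (zc - za)"
    using nonzero_eq_divide_eq[OF W(2), of "zb - za" "zc - za"] assms(7) by simp
  have zd: "zd - za = (1 / W) * (zc - za)"
    using nonzero_eq_divide_eq[OF W(1), of "zd - za" "zc - za"] assms(6) by simp
  let ?K = "convex hull {za, zb, zc} \<union> convex hull {za, zc, zd}"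
  have "(1/2) *\<^sub>R zb + (1/2) *\<^sub>R zd \<in> ?K"
    using assms(8) by (intro convexD) (auto intro: hull_inc)
  moreover have "(1/2) *\<^sub>R zb + (1/2) *\<^sub>R zd = za + of_real (Re (1 / W)) * (zc - za)"
  proof -
    have mid: "1 / cnj W + 1 / W = 2 * of_real (Re (1 / W))"
      using complex_add_cnj[of "1 / W"] by (simp add: add.commute)
    have "(1/2) *\<^sub>R zb + (1/2) *\<^sub>R zd = za + ((zb - za) + (zd - za)) / 2"
      by (simp add: scaleR_conv_of_real field_simps)
    also have "\<dots> = za + ((1 / cnj W + 1 / W) / 2) * (zc - za)"
      unfolding zb zd by (simp add: field_simps)
    finally show ?thesis unfolding mid by simp
  qed
  moreover have "{za, zc, zd} = {za, zd, zc}" by blast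
  ultimately have "Re (1 / W) \<le> 1"
    using in_triangle_on_side_line_imp_le_1[OF assms(5) zb Im_inv(2)]
      in_triangle_on_side_line_imp_le_1[OF assms(5) zd Im_inv(1)]
    by (metis Un_iff)
  moreover have "Re (1 / W) = (1 - y * cos a) / (y\<^sup>2 - 2 * y * cos a + 1)"
  proof -
    have ReW: "Re W = 1 - y * cos a" and ImW: "Im W = - (y * sin a)"
      using assms(1) by simp_all
    have "(Re W)\<^sup>2 + (Im W)\<^sup>2 = y\<^sup>2 - 2 * y * cos a + 1"
      unfolding ReW ImW using sin_cos_squared_add[of a] by algebra
    then show ?thesis by (simp add: Re_divide ReW)
  qed
  ultimately have "1 - y * cos a \<le> y\<^sup>2 - 2 * y * cos a + 1"
    using sq_minus_two_cos_plus_one_pos[OF assms(3,4), of y] by (simp add: divide_le_eq_1)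
  then show ?thesis using assms(2) by (simp add: power2_eq_square)
qed

lemma kite_angle_and_cos_le:
  fixes za zb zc zd :: complex and ra rc a :: real
  assumes "ra > 0" "rc > 0" "0 < a" "a < pi"
    and "cmod (zb - za) = ra" "cmod (zb - zc) = rc" "cmod (zd - za) = ra" "cmod (zd - zc) = rc"
    and "arg2pi ((za - zb) / (zc - zb)) = a" "arg2pi ((zc - zd) / (za - zd)) = a"
    and "convex (convex hull {za, zb, zc} \<union> convex hull {za, zc, zd})"
  shows "arg2pi ((zd - za) / (zb - za)) = 2 * half_kite_angle a (rc / ra) \<and> cos a \<le> rc / ra"
proof -
  have y: "rc / ra > 0" using assms(1,2) by simp
  have "zb \<noteq> za" using assms(1,5) by auto
  moreover have "zc \<noteq> za"
  proof
    assume "zc = za"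
    then have "arg2pi 1 = a" using assms(9) \<open>zb \<noteq> za\<close> by simp
    then show False using assms(3) by (simp add: arg2pi_def)
  qed
  ultimately show ?thesis
    using kite_angle_eq[OF _ y assms(3,4) _ kite_sides_eq[OF assms(1-10)]]
      convex_kite_imp_cos_le[OF _ y assms(3,4) _ kite_sides_eq[OF assms(1-10)] assms(11)]
    by blast
qed

definition opposite_white :: "('v,'f) bquad \<Rightarrow> 'v \<Rightarrow> 'f \<Rightarrow> 'v" where
  "opposite_white D v f = (case qd D f of (a,b,c,d) \<Rightarrow> if v = a then c else a)"

lemma finite_bquad_qd:
  assumes "finite_bquad D" "f \<in> fcs D" "qd D f = (a,b,c,d)"
  shows "a \<in> wht D \<and> c \<in> wht D \<and> b \<in> blk D \<and> d \<in> blk D \<and> a \<noteq> c \<and> b \<noteq> d \<and>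
    wht D \<inter> blk D = {}"
  using assms unfolding finite_bquad_def by fastforce

lemma opposite_white_in_face:
  assumes "finite_bquad D" "f \<in> fcs D" "v \<in> wht D" "v \<in> fverts D f"
  shows "opposite_white D v f \<in> wht D" "opposite_white D v f \<noteq> v"
    "opposite_white D v f \<in> fverts D f"
proof -
  obtain a b c d where q: "qd D f = (a,b,c,d)" by (cases "qd D f") auto
  show "opposite_white D v f \<in> wht D" "opposite_white D v f \<noteq> v"
    "opposite_white D v f \<in> fverts D f"
    using finite_bquad_qd[OF assms(1,2) q] assms(3,4) q
    unfolding opposite_white_def fverts_def by auto
qed

lemma white_in_face_eq_opposite_white:
  assumes "finite_bquad D" "f \<in> fcs D" "v \<in> wht D" "w \<in> wht D" "v \<noteq> w"
    "v \<in> fverts D f" "w \<in> fverts D f"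
  shows "w = opposite_white D v f"
proof -
  obtain a b c d where q: "qd D f = (a,b,c,d)" by (cases "qd D f") auto
  show ?thesis using finite_bquad_qd[OF assms(1,2) q] assms(3-7) q
    unfolding opposite_white_def fverts_def by auto
qed

text \<open>Two faces sharing two white vertices would share a diagonal, which strong
  regularity excludes: faces meet in at most an edge, and edges join white to black.\<close>

lemma face_unique_of_two_whites:
  assumes fb: "finite_bquad D" and f: "f \<in> fcs D" and g: "g \<in> fcs D"
    and "v \<in> wht D" "w \<in> wht D" "v \<noteq> w"
    and "v \<in> fverts D f" "w \<in> fverts D f" "v \<in> fverts D g" "w \<in> fverts D g"
  shows "f = g"
proof (rule ccontr)
  assume "f \<noteq> g"
  obtain a b c d where q: "qd D f = (a,b,c,d)" by (cases "qd D f") auto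
  let ?I = "fverts D f \<inter> fverts D g"
  have vw: "{v, w} \<subseteq> ?I" using assms by auto
  have "finite ?I" unfolding fverts_def q by auto
  then have "2 \<le> card ?I" using card_mono[OF _ vw] assms(6) by simp
  moreover have "?I = {} \<or> card ?I = 1 \<or> ?I \<in> fedges D f \<inter> fedges D g"
    using fb f g \<open>f \<noteq> g\<close> unfolding finite_bquad_def by blast
  ultimately have "?I \<in> fedges D f" by auto
  then have "{v, w} \<subseteq> {a,b} \<or> {v, w} \<subseteq> {b,c} \<or> {v, w} \<subseteq> {c,d} \<or> {v, w} \<subseteq> {d,a}"
    using vw unfolding fedges_def q by auto
  then show False using finite_bquad_qd[OF fb f q] assms(4-6) by auto
qed

lemma G_neighbours_eq_opposite_whites:
  assumes fb: "finite_bquad D" and v: "v \<in> wht D"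
  shows "{w. {v, w} \<in> G_edges D} = opposite_white D v ` faces_at D v"
proof
  show "{w. {v, w} \<in> G_edges D} \<subseteq> opposite_white D v ` faces_at D v"
  proof
    fix w assume "w \<in> {w. {v, w} \<in> G_edges D}"
    then obtain f where "w \<in> wht D" "v \<noteq> w" "f \<in> fcs D" "v \<in> fverts D f" "w \<in> fverts D f"
      unfolding G_edges_def by (auto simp: doubleton_eq_iff)
    then show "w \<in> opposite_white D v ` faces_at D v"
      using white_in_face_eq_opposite_white[OF fb _ v] unfolding faces_at_def by blast
  qed
next
  show "opposite_white D v ` faces_at D v \<subseteq> {w. {v, w} \<in> G_edges D}"
    using opposite_white_in_face[OF fb _ v] v
    unfolding faces_at_def G_edges_def by blast
qed

lemma inj_on_opposite_white:
  assumes fb: "finite_bquad D" and v: "v \<in> wht D"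
  shows "inj_on (opposite_white D v) (faces_at D v)"
proof
  fix f g assume "f \<in> faces_at D v" "g \<in> faces_at D v"
    and eq: "opposite_white D v f = opposite_white D v g"
  then have f: "f \<in> fcs D" "v \<in> fverts D f" and g: "g \<in> fcs D" "v \<in> fverts D g"
    unfolding faces_at_def by auto
  show "f = g"
    using face_unique_of_two_whites[OF fb f(1) g(1) v]
      opposite_white_in_face[OF fb f(1) v f(2)] opposite_white_in_face[OF fb g(1) v g(2)]
      f(2) g(2) eq
    by metis
qed

lemma G_face_opposite_white:
  assumes fb: "finite_bquad D" and v: "v \<in> wht D" and f: "f \<in> faces_at D v"
  shows "G_face D {v, opposite_white D v f} = f"
  unfolding G_face_def
proof (rule the_equality)
  have f': "f \<in> fcs D" "v \<in> fverts D f" using f unfolding faces_at_def by auto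
  note w = opposite_white_in_face[OF fb f'(1) v f'(2)]
  show "f \<in> fcs D \<and> {v, opposite_white D v f} \<subseteq> fverts D f" using f' w by auto
  fix g assume "g \<in> fcs D \<and> {v, opposite_white D v f} \<subseteq> fverts D g"
  then show "g = f"
    using face_unique_of_two_whites[OF fb f'(1) _ v w(1) w(2)[symmetric] f'(2) w(3)] by auto
qed

lemma laplacian_eq_sum_faces_at:
  assumes "finite_bquad D" "v \<in> wht D"
  shows "laplacian D \<alpha> r h v = (\<Sum>f\<in>faces_at D v.
    2 * fprime (\<alpha> f) (ln (r (opposite_white D v f) / r v)) * (h (opposite_white D v f) - h v))"
  unfolding laplacian_def G_neighbours_eq_opposite_whites[OF assms]
  using inj_on_opposite_white[OF assms] G_face_opposite_white[OF assms]
  by (simp add: sum.reindex)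

lemma kangle_white_vertex:
  assumes fb: "finite_bquad D" and ad: "admissible D \<alpha>" and cp: "circle_pattern D \<alpha> z r"
    and cq: "convex_q_bounded q D z"
    and f: "f \<in> fcs D" and v: "v \<in> wht D" and vf: "v \<in> fverts D f"
  shows "kangle D z f v = 2 * half_kite_angle (\<alpha> f) (r (opposite_white D v f) / r v)
    \<and> cos (\<alpha> f) \<le> r (opposite_white D v f) / r v"
proof -
  obtain a b c d where q: "qd D f = (a,b,c,d)" by (cases "qd D f") auto
  note colours = finite_bquad_qd[OF fb f q]
  have r: "r a > 0" "r c > 0" using cp colours unfolding circle_pattern_def by auto
  have \<alpha>: "0 < \<alpha> f" "\<alpha> f < pi" using ad f unfolding admissible_def by auto
  have sides: "cmod (z b - z a) = r a" "cmod (z b - z c) = r c"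
      "cmod (z d - z a) = r a" "cmod (z d - z c) = r c"
    and "kangle D z f b = \<alpha> f" "kangle D z f d = \<alpha> f"
    using cp f q unfolding circle_pattern_def by fastforce+
  moreover have "b \<noteq> a" "d \<noteq> a" "d \<noteq> b" "d \<noteq> c" using colours by auto
  ultimately have angles: "arg2pi ((z a - z b) / (z c - z b)) = \<alpha> f"
      "arg2pi ((z c - z d) / (z a - z d)) = \<alpha> f"
    unfolding kangle_def q by simp_all
  have cv: "convex (convex hull {z a, z b, z c} \<union> convex hull {z a, z c, z d})"
    using cq f q unfolding convex_q_bounded_def kite_def by fastforce
  then have cv': "convex (convex hull {z c, z d, z a} \<union> convex hull {z c, z a, z b})"
    by (simp add: insert_commute Un_commute)
  consider "v = a" | "v = c" "v \<noteq> a" using v vf colours unfolding fverts_def q by auto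
  then show ?thesis
  proof cases
    case 1
    then show ?thesis
      using kite_angle_and_cos_le[OF r \<alpha> sides angles cv]
      unfolding kangle_def opposite_white_def q by simp
  next
    case 2
    then show ?thesis
      using kite_angle_and_cos_le[OF r(2,1) \<alpha> sides(4,3,2,1) angles(2,1) cv'] colours
      unfolding kangle_def opposite_white_def q by auto
  qed
qed

lemma sum_half_kite_angle_at_white:
  assumes fb: "finite_bquad D" and ad: "admissible D \<alpha>" and cp: "circle_pattern D \<alpha> z r"
    and cq: "convex_q_bounded q D z" and v: "v \<in> wht D" and iv: "interior_vertex D v"
  shows "(\<Sum>f\<in>faces_at D v. half_kite_angle (\<alpha> f) (r (opposite_white D v f) / r v)) = pi"
proof -
  have "2 * pi = (\<Sum>f\<in>faces_at D v. kangle D z f v)"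
    using cp iv unfolding circle_pattern_def interior_vertex_def by auto
  also have "\<dots> = 2 * (\<Sum>f\<in>faces_at D v. half_kite_angle (\<alpha> f) (r (opposite_white D v f) / r v))"
    unfolding sum_distrib_left using kangle_white_vertex[OF fb ad cp cq _ v]
    by (intro sum.cong) (auto simp: faces_at_def)
  finally show ?thesis by simp
qed

lemma laplacian_radius_quotient_eq:
  assumes fb: "finite_bquad D" and ad: "admissible D \<alpha>"
    and r: "\<forall>w\<in>wht D. r w > 0" and r': "\<forall>w\<in>wht D. r' w > 0" and v: "v \<in> wht D"
  shows "laplacian D \<alpha> r (\<lambda>w. r' w / r w) v = 2 * (r' v / r v) *
    (\<Sum>f\<in>faces_at D v. half_kite_angle' (\<alpha> f) (r (opposite_white D v f) / r v) *
       (r' (opposite_white D v f) / r' v - r (opposite_white D v f) / r v))"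
proof -
  have "r v > 0" "r' v > 0" using r r' v by auto
  have summand: "2 * fprime a (ln (r w / r v)) * (r' w / r w - r' v / r v)
      = 2 * (r' v / r v) * (half_kite_angle' a (r w / r v) * (r' w / r' v - r w / r v))"
    if "0 < a" "a < pi" "r w > 0" "r' w > 0" for a w
  proof -
    have "r w / r v * (r' w / r w - r' v / r v) = r' v / r v * (r' w / r' v - r w / r v)"
      using that \<open>r v > 0\<close> \<open>r' v > 0\<close> by (simp add: field_simps)
    moreover have "fprime a (ln (r w / r v)) = r w / r v * half_kite_angle' a (r w / r v)"
      using that \<open>r v > 0\<close> by (intro fprime_ln_eq) auto
    ultimately show ?thesis by (metis mult.assoc mult.left_commute)
  qed
  show ?thesis
    unfolding laplacian_eq_sum_faces_at[OF fb v] sum_distrib_left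
  proof (rule sum.cong[OF refl], rule summand)
    fix f assume f: "f \<in> faces_at D v"
    then have "f \<in> fcs D" "v \<in> fverts D f" unfolding faces_at_def by auto
    then show "0 < \<alpha> f" "\<alpha> f < pi"
      "r (opposite_white D v f) > 0" "r' (opposite_white D v f) > 0"
      using ad r r' opposite_white_in_face(1)[OF fb _ v] unfolding admissible_def by auto
  qed
qed

lemma laplacian_radius_quotient_nonneg:
  assumes fb: "finite_bquad D" and ad: "admissible D \<alpha>"
    and cp: "circle_pattern D \<alpha> z r" and cq: "convex_q_bounded q D z"
    and cp': "circle_pattern D \<alpha> z' r'" and cq': "convex_q_bounded q D z'"
    and v: "v \<in> wht D" and iv: "interior_vertex D v"
  shows "laplacian D \<alpha> r (\<lambda>w. r' w / r w) v \<ge> 0"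
proof -
  define y where "y f = r (opposite_white D v f) / r v" for f
  define y' where "y' f = r' (opposite_white D v f) / r' v" for f
  have r: "\<forall>w\<in>wht D. r w > 0" and r': "\<forall>w\<in>wht D. r' w > 0"
    using cp cp' unfolding circle_pattern_def by auto
  have "0 \<le> (\<Sum>f\<in>faces_at D v. half_kite_angle' (\<alpha> f) (y f) * (y' f - y f))"
  proof (rule sum_half_kite_angle'_mult_diff_nonneg)
    show "finite (faces_at D v)" using fb unfolding faces_at_def finite_bquad_def by auto
    fix f assume "f \<in> faces_at D v"
    then have f: "f \<in> fcs D" "v \<in> fverts D f" unfolding faces_at_def by auto
    show "0 < \<alpha> f \<and> \<alpha> f < pi" using ad f unfolding admissible_def by auto
    show "0 < y f \<and> cos (\<alpha> f) \<le> y f" "0 < y' f \<and> cos (\<alpha> f) \<le> y' f"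
      using kangle_white_vertex[OF fb ad cp cq f(1) v f(2)] kangle_white_vertex[OF fb ad cp' cq' f(1) v f(2)]
        opposite_white_in_face(1)[OF fb f(1) v f(2)] r r' v
      unfolding y_def y'_def by auto
  next
    show "(\<Sum>f\<in>faces_at D v. half_kite_angle (\<alpha> f) (y f))
        = (\<Sum>f\<in>faces_at D v. half_kite_angle (\<alpha> f) (y' f))"
      using sum_half_kite_angle_at_white[OF fb ad cp cq v iv]
        sum_half_kite_angle_at_white[OF fb ad cp' cq' v iv]
      unfolding y_def y'_def by simp
  qed
  moreover have "0 < r' v / r v" using r r' v by simp
  ultimately show ?thesis
    unfolding laplacian_radius_quotient_eq[OF fb ad r r' v] y_def y'_def
    by (intro mult_nonneg_nonneg) auto
qed

theorem lemma6p4: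
  fixes D :: "('v,'f) bquad" and \<alpha> :: "'f \<Rightarrow> real" and q :: real
    and z zt :: "'v \<Rightarrow> complex" and r rt :: "'v \<Rightarrow> real"
  assumes "finite_bquad D"
    and "admissible D \<alpha>"
    and "q > 1"
    and "circle_pattern D \<alpha> z r" and "embedded_pattern D z" and "convex_q_bounded q D z"
    and "circle_pattern D \<alpha> zt rt" and "embedded_pattern D zt" and "convex_q_bounded q D zt"
  shows "\<forall>v\<in>wht D. interior_vertex D v \<longrightarrow>
           laplacian D \<alpha> r (\<lambda>w. rt w / r w) v \<ge> 0 \<and>
           laplacian D \<alpha> rt (\<lambda>w. 1 / (rt w / r w)) v \<ge> 0"
  using laplacian_radius_quotient_nonneg[OF assms(1,2,4,6,7,9)]
    laplacian_radius_quotient_nonneg[OF assms(1,2,7,9,4,6)]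
  by simp

end
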